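(* $\left\|\begin{bmatrix}1&1&1&1\\0&1&0&0\\0&0&1&0\\0&0&0&1\end{bmatrix}\right\|_\bullet>\left\|\begin{bmatrix}1&1&0\\1&1&1\\0&1&0\end{bmatrix}\right\|_\bullet$.
   Context: Fix $\mathbb F\in\{\mathbb R,\mathbb C\}$. For an $m\times n$ matrix $A$, the Schur norm is $\|A\|_\bullet=\sup\{\|A\bullet X\|: X\in M_{m,n}(\mathbb F),\ \|X\|\le1\}$, where $A\bullet X=[a_{ij}x_{ij}]$ is the entrywise product and $\|\cdot\|$ is the operator norm $\ell^2_n\to\ell^2_m$. *)

theory Defs
  imports "HOL-Analysis.Analysis"
begin

text \<open>Operator norm of an m x n matrix as a map from l2^n to l2^m
  (the norm on 'a^'n is the Euclidean/l2 norm).\<close>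
definition mat_opnorm :: "'a::{real_normed_field}^'n^'m \<Rightarrow> real" where
  "mat_opnorm A = onorm (\<lambda>x. A *v x)"

definition schur_prod :: "'a::times^'n^'m \<Rightarrow> 'a^'n^'m \<Rightarrow> 'a^'n^'m" where
  "schur_prod A X = (\<chi> i j. A $ i $ j * X $ i $ j)"

definition schur_norm :: "'a::{real_normed_field}^'n^'m \<Rightarrow> real" where
  "schur_norm A = Sup {mat_opnorm (schur_prod A X) | X. mat_opnorm X \<le> 1}"

definition M4 :: "'a::{real_normed_field}^4^4" where
  "M4 = (\<chi> i j. if i = 0 \<or> i = j then 1 else 0)"

definition M3 :: "'a::{real_normed_field}^3^3" where
  "M3 = (\<chi> i j. if (i = 0 \<and> j \<noteq> 2) \<or> i = 1 \<or> (i = 2 \<and> j = 1) then 1 else 0)"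

end

theory Submission
  imports Defs
begin

text \<open>
  Upper bound: if \<open>A = R C\<^sup>T\<close> with real factors whose rows have squared lengths at most
  \<open>\<rho>\<close> and \<open>\<gamma>\<close>, then \<open>A \<bullet> X = \<Sum>\<^sub>k diag(R e\<^sub>k) X diag(C e\<^sub>k)\<close> and Cauchy--Schwarz give
  \<open>\<parallel>A\<parallel>\<^sub>\<bullet> \<le> \<surd>(\<rho>\<gamma>)\<close>. An explicit rational factorization of the 3\<times>3 matrix yields
  \<open>\<parallel>M3\<parallel>\<^sub>\<bullet> \<le> 1.2573\<close>.
  Lower bound: the Householder reflection \<open>X = I - 2vv\<^sup>T/\<parallel>v\<parallel>\<^sup>2\<close> with \<open>v = (3,1,1,1)\<close> is
  an isometry, and evaluating \<open>M4 \<bullet> X\<close> at \<open>y = (4,7,7,7)\<close> shows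
  \<open>\<parallel>M4\<parallel>\<^sub>\<bullet> \<ge> \<surd>(775/489) > 1.2589\<close>.
  All matrices involved are real, so the argument works verbatim over \<open>\<real>\<close> and \<open>\<complex>\<close>.
\<close>

lemma norm_vec_power2: "(norm (x::'a::real_normed_vector^'n))\<^sup>2 = (\<Sum>i\<in>UNIV. (norm (x$i))\<^sup>2)"
  by (simp add: norm_vec_def L2_set_def sum_nonneg)

lemma norm_mult_vec_le_mat_opnorm:
  fixes X :: "'a::{real_normed_field,euclidean_space}^'n^'m"
  shows "norm (X *v y) \<le> mat_opnorm X * norm y"
  unfolding mat_opnorm_def by (rule onorm) simp

lemma mat_opnorm_le:
  fixes X :: "'a::{real_normed_field,euclidean_space}^'n^'m"
  assumes "\<And>y. norm (X *v y) \<le> K * norm y"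
  shows "mat_opnorm X \<le> K"
  unfolding mat_opnorm_def by (rule onorm_le) (rule assms)

lemma mat_opnorm_nonneg: "0 \<le> mat_opnorm (X :: 'a::{real_normed_field,euclidean_space}^'n^'m)"
  unfolding mat_opnorm_def by (rule onorm_pos_le) simp

lemma mat_opnorm_zero: "mat_opnorm (0 :: 'a::{real_normed_field,euclidean_space}^'n^'m) = 0"
  by (intro antisym mat_opnorm_le mat_opnorm_nonneg) (simp add: matrix_vector_mult_def vec_eq_iff)

definition of_real_mat :: "('m \<Rightarrow> 'n \<Rightarrow> real) \<Rightarrow> 'a::real_normed_field^'n^'m" where
  "of_real_mat f = (\<chi> i j. of_real (f i j))"

definition of_real_vec :: "('n \<Rightarrow> real) \<Rightarrow> 'a::real_normed_field^'n" where
  "of_real_vec g = (\<chi> i. of_real (g i))"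

lemma of_real_mat_mult_vec:
  "(of_real_mat f :: 'a::real_normed_field^'n^'m) *v of_real_vec g
     = of_real_vec (\<lambda>i. \<Sum>j\<in>UNIV. f i j * g j)"
  by (simp add: of_real_mat_def of_real_vec_def matrix_vector_mult_def vec_eq_iff)

lemma schur_prod_of_real_mat:
  "schur_prod (of_real_mat f :: 'a::real_normed_field^'n^'m) (of_real_mat g)
     = of_real_mat (\<lambda>i j. f i j * g i j)"
  by (simp add: schur_prod_def of_real_mat_def)

lemma norm_of_real_vec:
  "norm (of_real_vec g :: 'a::real_normed_field^'n) = sqrt (\<Sum>i\<in>UNIV. (g i)\<^sup>2)"
  by (simp add: of_real_vec_def norm_vec_def L2_set_def)

lemma schur_prod_factorization_mult_vec_nth:
  fixes X :: "'a::real_normed_field^'n^'m"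
    and r :: "'m \<Rightarrow> 'k::finite \<Rightarrow> real" and c :: "'n \<Rightarrow> 'k \<Rightarrow> real"
  shows "(schur_prod (of_real_mat (\<lambda>i j. \<Sum>k\<in>UNIV. r i k * c j k)) X *v y) $ i
           = (\<Sum>k\<in>UNIV. r i k *\<^sub>R (X *v (\<chi> j. c j k *\<^sub>R y$j)) $ i)"
proof -
  have "(schur_prod (of_real_mat (\<lambda>i j. \<Sum>k\<in>UNIV. r i k * c j k)) X *v y) $ i
      = (\<Sum>j\<in>UNIV. \<Sum>k\<in>UNIV. of_real (r i k * c j k) * X$i$j * y$j)"
    by (simp add: matrix_vector_mult_def schur_prod_def of_real_mat_def sum_distrib_right)
  also have "\<dots> = (\<Sum>k\<in>UNIV. \<Sum>j\<in>UNIV. of_real (r i k * c j k) * X$i$j * y$j)"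
    by (rule sum.swap)
  also have "\<dots> = (\<Sum>k\<in>UNIV. r i k *\<^sub>R (X *v (\<chi> j. c j k *\<^sub>R y$j)) $ i)"
    by (simp add: matrix_vector_mult_def scaleR_sum_right scaleR_conv_of_real sum_distrib_left mult_ac)
  finally show ?thesis .
qed

lemma nonneg_if_sum_power2_le: "(\<Sum>k\<in>K. (f k)\<^sup>2) \<le> (\<rho>::real) \<Longrightarrow> 0 \<le> \<rho>"
  by (erule order_trans[rotated]) (simp add: sum_nonneg)

lemma norm_schur_prod_factorization_mult_vec_le:
  fixes X :: "'a::{real_normed_field,euclidean_space}^'n^'m"
    and r :: "'m \<Rightarrow> 'k::finite \<Rightarrow> real" and c :: "'n \<Rightarrow> 'k \<Rightarrow> real"
  assumes r: "\<And>i. (\<Sum>k\<in>UNIV. (r i k)\<^sup>2) \<le> \<rho>" and c: "\<And>j. (\<Sum>k\<in>UNIV. (c j k)\<^sup>2) \<le> \<gamma>"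
  shows "norm (schur_prod (of_real_mat (\<lambda>i j. \<Sum>k\<in>UNIV. r i k * c j k)) X *v y)
           \<le> sqrt (\<rho> * \<gamma>) * mat_opnorm X * norm y"
proof -
  let ?B = "schur_prod (of_real_mat (\<lambda>i j. \<Sum>k\<in>UNIV. r i k * c j k)) X"
  define w where "w k = (\<chi> j. c j k *\<^sub>R y$j)" for k
  have "0 \<le> \<rho>" "0 \<le> \<gamma>"
    using nonneg_if_sum_power2_le[OF r] nonneg_if_sum_power2_le[OF c] .
  have row: "(norm ((?B *v y)$i))\<^sup>2 \<le> \<rho> * (\<Sum>k\<in>UNIV. (norm ((X *v w k)$i))\<^sup>2)" for i
  proof -
    have "norm ((?B *v y)$i) \<le> (\<Sum>k\<in>UNIV. \<bar>r i k\<bar> * \<bar>norm ((X *v w k)$i)\<bar>)"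
      unfolding schur_prod_factorization_mult_vec_nth w_def
      by (rule order_trans[OF norm_sum]) simp
    also have "\<dots> \<le> L2_set (r i) UNIV * L2_set (\<lambda>k. norm ((X *v w k)$i)) UNIV"
      by (rule L2_set_mult_ineq)
    finally have "(norm ((?B *v y)$i))\<^sup>2
        \<le> (L2_set (r i) UNIV * L2_set (\<lambda>k. norm ((X *v w k)$i)) UNIV)\<^sup>2"
      by (simp add: power_mono)
    also have "\<dots> = (\<Sum>k\<in>UNIV. (r i k)\<^sup>2) * (\<Sum>k\<in>UNIV. (norm ((X *v w k)$i))\<^sup>2)"
      by (simp add: L2_set_def power_mult_distrib sum_nonneg)
    also have "\<dots> \<le> \<rho> * (\<Sum>k\<in>UNIV. (norm ((X *v w k)$i))\<^sup>2)"
      by (rule mult_right_mono[OF r]) (simp add: sum_nonneg)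
    finally show ?thesis .
  qed
  have "(norm (?B *v y))\<^sup>2 \<le> (\<Sum>i\<in>UNIV. \<rho> * (\<Sum>k\<in>UNIV. (norm ((X *v w k)$i))\<^sup>2))"
    unfolding norm_vec_power2[of "?B *v y"] by (rule sum_mono[OF row])
  also have "\<dots> = \<rho> * (\<Sum>k\<in>UNIV. \<Sum>i\<in>UNIV. (norm ((X *v w k)$i))\<^sup>2)"
    by (subst sum.swap) (simp add: sum_distrib_left)
  also have "\<dots> = \<rho> * (\<Sum>k\<in>UNIV. (norm (X *v w k))\<^sup>2)"
    by (simp only: norm_vec_power2)
  also have "\<dots> \<le> \<rho> * (\<Sum>k\<in>UNIV. (mat_opnorm X)\<^sup>2 * (norm (w k))\<^sup>2)"
    using norm_mult_vec_le_mat_opnorm[of X "w _"] \<open>0 \<le> \<rho>\<close>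
    by (intro mult_left_mono sum_mono) (metis norm_ge_zero power_mono power_mult_distrib)+
  also have "\<dots> = \<rho> * (mat_opnorm X)\<^sup>2 * (\<Sum>k\<in>UNIV. \<Sum>j\<in>UNIV. (c j k)\<^sup>2 * (norm (y$j))\<^sup>2)"
    by (simp add: w_def norm_vec_power2 power_mult_distrib sum_distrib_left mult_ac)
  also have "\<dots> = \<rho> * (mat_opnorm X)\<^sup>2 * (\<Sum>j\<in>UNIV. (norm (y$j))\<^sup>2 * (\<Sum>k\<in>UNIV. (c j k)\<^sup>2))"
    by (subst sum.swap) (simp add: sum_distrib_left mult_ac)
  also have "\<dots> \<le> \<rho> * (mat_opnorm X)\<^sup>2 * (\<Sum>j\<in>UNIV. (norm (y$j))\<^sup>2 * \<gamma>)"
    using \<open>0 \<le> \<rho>\<close> by (intro mult_left_mono sum_mono c) auto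
  also have "\<dots> = \<rho> * (mat_opnorm X)\<^sup>2 * ((\<Sum>j\<in>UNIV. (norm (y$j))\<^sup>2) * \<gamma>)"
    by (simp only: sum_distrib_right)
  also have "\<dots> = \<rho> * \<gamma> * (mat_opnorm X * norm y)\<^sup>2"
    by (simp only: norm_vec_power2 power_mult_distrib mult_ac)
  also have "\<dots> = (sqrt (\<rho> * \<gamma>) * mat_opnorm X * norm y)\<^sup>2"
    using \<open>0 \<le> \<rho>\<close> \<open>0 \<le> \<gamma>\<close> by (simp add: power_mult_distrib)
  finally show ?thesis
    by (rule power2_le_imp_le) (simp add: \<open>0 \<le> \<rho>\<close> \<open>0 \<le> \<gamma>\<close> mat_opnorm_nonneg)
qed

lemma mat_opnorm_schur_prod_factorization_le:
  fixes X :: "'a::{real_normed_field,euclidean_space}^'n^'m"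
    and r :: "'m \<Rightarrow> 'k::finite \<Rightarrow> real" and c :: "'n \<Rightarrow> 'k \<Rightarrow> real"
  assumes "\<And>i. (\<Sum>k\<in>UNIV. (r i k)\<^sup>2) \<le> \<rho>" and "\<And>j. (\<Sum>k\<in>UNIV. (c j k)\<^sup>2) \<le> \<gamma>"
  shows "mat_opnorm (schur_prod (of_real_mat (\<lambda>i j. \<Sum>k\<in>UNIV. r i k * c j k)) X)
           \<le> sqrt (\<rho> * \<gamma>) * mat_opnorm X"
  by (rule mat_opnorm_le) (rule norm_schur_prod_factorization_mult_vec_le[OF assms])

lemma
  fixes A :: "'a::{real_normed_field,euclidean_space}^'n^'m"
  assumes "0 \<le> K" and bound: "\<And>X. mat_opnorm (schur_prod A X) \<le> K * mat_opnorm X"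
  shows schur_norm_le: "schur_norm A \<le> K"
    and bdd_above_schur_norm: "bdd_above {mat_opnorm (schur_prod A X) | X. mat_opnorm X \<le> 1}"
proof -
  have le: "mat_opnorm (schur_prod A X) \<le> K" if "mat_opnorm X \<le> 1" for X
    using bound[of X] mult_left_mono[OF that \<open>0 \<le> K\<close>] by simp
  then show "schur_norm A \<le> K"
    unfolding schur_norm_def by (intro cSup_least) (auto intro!: exI[of _ 0] simp: mat_opnorm_zero)
  show "bdd_above {mat_opnorm (schur_prod A X) | X. mat_opnorm X \<le> 1}"
    using le by (auto simp: bdd_above_def)
qed

lemma schur_norm_factorization_le:
  fixes r :: "'m::finite \<Rightarrow> 'k::finite \<Rightarrow> real" and c :: "'n::finite \<Rightarrow> 'k \<Rightarrow> real"
  assumes r: "\<And>i. (\<Sum>k\<in>UNIV. (r i k)\<^sup>2) \<le> \<rho>" and c: "\<And>j. (\<Sum>k\<in>UNIV. (c j k)\<^sup>2) \<le> \<gamma>"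
  shows "schur_norm (of_real_mat (\<lambda>i j. \<Sum>k\<in>UNIV. r i k * c j k)
           :: 'a::{real_normed_field,euclidean_space}^'n^'m) \<le> sqrt (\<rho> * \<gamma>)"
proof (rule schur_norm_le)
  have "0 \<le> \<rho>" "0 \<le> \<gamma>"
    using nonneg_if_sum_power2_le[OF r] nonneg_if_sum_power2_le[OF c] .
  then show "0 \<le> sqrt (\<rho> * \<gamma>)" by simp
  show "mat_opnorm (schur_prod (of_real_mat (\<lambda>i j. \<Sum>k\<in>UNIV. r i k * c j k)) X)
      \<le> sqrt (\<rho> * \<gamma>) * mat_opnorm X" for X :: "'a^'n^'m"
    by (rule mat_opnorm_schur_prod_factorization_le[OF r c])
qed

lemma mat_opnorm_schur_prod_le_schur_norm:
  fixes a :: "'m::finite \<Rightarrow> 'n::finite \<Rightarrow> real" and X :: "'a::{real_normed_field,euclidean_space}^'n^'m"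
  assumes "mat_opnorm X \<le> 1"
  shows "mat_opnorm (schur_prod (of_real_mat a) X) \<le> schur_norm (of_real_mat a :: 'a^'n^'m)"
proof -
  let ?\<gamma> = "\<Sum>j\<in>UNIV. \<Sum>k\<in>UNIV. (a k j)\<^sup>2"
  \<comment> \<open>The supremum is bounded, by the trivial factorization \<open>A = I A\<close>.\<close>
  have "bdd_above {mat_opnorm (schur_prod (of_real_mat a :: 'a^'n^'m) X) | X. mat_opnorm X \<le> 1}"
  proof (rule bdd_above_schur_norm)
    show "0 \<le> sqrt (1 * ?\<gamma>)" by (simp add: sum_nonneg)
    have factorization:
      "of_real_mat a = (of_real_mat (\<lambda>i j. \<Sum>k\<in>UNIV. of_bool (k = i) * a k j) :: 'a^'n^'m)"
      by simp
    show "mat_opnorm (schur_prod (of_real_mat a) Y) \<le> sqrt (1 * ?\<gamma>) * mat_opnorm Y" for Y :: "'a^'n^'m"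
    proof (subst factorization, rule mat_opnorm_schur_prod_factorization_le)
      show "(\<Sum>k\<in>UNIV. (of_bool (k = i) :: real)\<^sup>2) \<le> 1" for i :: 'm
        by (simp add: power2_eq_square flip: of_bool_conj)
      show "(\<Sum>k\<in>UNIV. (a k j)\<^sup>2) \<le> ?\<gamma>" for j
        by (rule member_le_sum) (auto intro: sum_nonneg)
    qed
  qed
  then show ?thesis
    unfolding schur_norm_def by (rule cSup_upper[rotated]) (use assms in blast)
qed

definition reflection :: "('n::finite \<Rightarrow> real) \<Rightarrow> 'n \<Rightarrow> 'n \<Rightarrow> real" where
  "reflection v i j = (if i = j then 1 else 0) - 2 * v i * v j / (\<Sum>k\<in>UNIV. (v k)\<^sup>2)"

lemma norm_diff_scaleR_power2:
  fixes a s :: "'a::real_inner"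
  shows "(norm (a - t *\<^sub>R s))\<^sup>2 = (norm a)\<^sup>2 - 2 * t * inner a s + t\<^sup>2 * (norm s)\<^sup>2"
proof -
  have "(norm (a - t *\<^sub>R s))\<^sup>2 = inner a a - t * inner a s - t * inner s a + t * t * inner s s"
    by (simp add: power2_norm_eq_inner inner_diff_left algebra_simps)
  then show ?thesis
    by (simp only: power2_norm_eq_inner inner_commute[of s a]) (simp add: power2_eq_square)
qed

text \<open>For \<open>v = 0\<close> the division by zero makes \<open>reflection v\<close> the identity, so no hypothesis is needed.\<close>
lemma norm_reflection_mult_vec:
  fixes x :: "'a::{real_normed_field,euclidean_space}^'n"
  shows "norm ((of_real_mat (reflection v) :: 'a^'n^'n) *v x) = norm x"
proof -
  define q where "q = (\<Sum>k\<in>UNIV. (v k)\<^sup>2)"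
  define s where "s = (\<Sum>j\<in>UNIV. v j *\<^sub>R x$j)"
  have nth: "((of_real_mat (reflection v) :: 'a^'n^'n) *v x) $ i = x$i - (2 * v i / q) *\<^sub>R s" for i
  proof -
    have "((of_real_mat (reflection v) :: 'a^'n^'n) *v x) $ i
        = (\<Sum>j\<in>UNIV. (if i = j then x$j else 0) - (2 * v i / q) *\<^sub>R (v j *\<^sub>R x$j))"
      unfolding matrix_vector_mult_def of_real_mat_def reflection_def q_def vec_lambda_beta
      by (intro sum.cong refl) (auto simp: of_real_diff left_diff_distrib scaleR_conv_of_real)
    then show ?thesis by (simp add: sum_subtractf scaleR_sum_right s_def)
  qed
  have cross: "(\<Sum>i\<in>UNIV. 2 * (2 * v i / q) * inner (x$i) s) = 4 / q * inner s s"
    by (simp add: s_def inner_sum_left sum_distrib_left mult_ac)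
  have square: "(\<Sum>i\<in>UNIV. (2 * v i / q)\<^sup>2 * (norm s)\<^sup>2) = 4 / q * inner s s"
  proof -
    have "(\<Sum>i\<in>UNIV. (2 * v i / q)\<^sup>2) = 4 * q / q\<^sup>2"
      by (simp add: q_def power_divide power_mult_distrib sum_distrib_left flip: sum_divide_distrib)
    also have "\<dots> = 4 / q"
      by (cases "q = 0") (simp_all add: power2_eq_square)
    finally show ?thesis
      by (simp add: power2_norm_eq_inner flip: sum_distrib_right)
  qed
  have "(norm ((of_real_mat (reflection v) :: 'a^'n^'n) *v x))\<^sup>2
      = (\<Sum>i\<in>UNIV. (norm (x$i))\<^sup>2) - (\<Sum>i\<in>UNIV. 2 * (2 * v i / q) * inner (x$i) s)
          + (\<Sum>i\<in>UNIV. (2 * v i / q)\<^sup>2 * (norm s)\<^sup>2)"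
    by (simp only: norm_vec_power2 nth norm_diff_scaleR_power2 sum.distrib sum_subtractf)
  also have "\<dots> = (norm x)\<^sup>2"
    by (simp only: cross square norm_vec_power2)
  finally show ?thesis by (simp add: power2_eq_iff_nonneg)
qed

lemma mat_opnorm_reflection_le:
  "mat_opnorm (of_real_mat (reflection v) :: 'a::{real_normed_field,euclidean_space}^'n^'n) \<le> 1"
  by (rule mat_opnorm_le) (simp add: norm_reflection_mult_vec)

definition triple :: "real \<Rightarrow> real \<Rightarrow> real \<Rightarrow> 3 \<Rightarrow> real" where
  "triple a b c k = (if k = 0 then a else if k = 1 then b else c)"

definition M3_left :: "3 \<Rightarrow> 3 \<Rightarrow> real" where
  "M3_left i = (if i = 0 then triple 35 1099 (-560) else if i = 1 then triple 990 723 (-135)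
     else triple 400 (-4) (-1165))"

definition M3_right :: "3 \<Rightarrow> 3 \<Rightarrow> real" where
  "M3_right j = (if j = 0 then triple 12 35 4 else if j = 1 then triple 19 20 (-25)
     else triple 35 5 12)"

lemma M3_factorization:
  "M3 = of_real_mat (\<lambda>i j. \<Sum>k\<in>UNIV. M3_left i k / 36645 * M3_right j k)"
  by (simp add: M3_def of_real_mat_def sum_3 M3_left_def M3_right_def triple_def vec_eq_iff forall_3)

lemma schur_norm_M3_le:
  "schur_norm (M3 :: 'a::{real_normed_field,euclidean_space}^3^3)
     \<le> sqrt (1522626 / 36645\<^sup>2 * 1394)"
  unfolding M3_factorization
proof (rule schur_norm_factorization_le)
  show "(\<Sum>k\<in>UNIV. (M3_left i k / 36645)\<^sup>2) \<le> 1522626 / 36645\<^sup>2" for i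
    using exhaust_3[of i] by (auto simp: sum_3 M3_left_def triple_def power_divide)
  show "(\<Sum>k\<in>UNIV. (M3_right j k)\<^sup>2) \<le> 1394" for j
    using exhaust_3[of j] by (auto simp: sum_3 M3_right_def triple_def)
qed

lemma schur_norm_M4_ge:
  "sqrt (775 / 3) / sqrt 163 \<le> schur_norm (M4 :: 'a::{real_normed_field,euclidean_space}^4^4)"
proof -
  define m :: "4 \<Rightarrow> 4 \<Rightarrow> real" where "m i j = (if i = 0 \<or> i = j then 1 else 0)" for i j
  define v :: "4 \<Rightarrow> real" where "v i = (if i = 0 then 3 else 1)" for i
  define y :: "4 \<Rightarrow> real" where "y i = (if i = 0 then 4 else 7)" for i
  let ?B = "schur_prod (of_real_mat m) (of_real_mat (reflection v)) :: 'a^4^4"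
  have M4: "M4 = of_real_mat m"
    by (simp add: M4_def of_real_mat_def m_def vec_eq_iff)
  have "(\<Sum>j\<in>UNIV. m i j * reflection v i j * y j) = (if i = 0 then -25/2 else 35/6)" for i
    using exhaust_4[of i] by (auto simp: sum_4 m_def reflection_def v_def y_def)
  then have "?B *v of_real_vec y = of_real_vec (\<lambda>i. if i = 0 then -25/2 else 35/6)"
    by (simp add: schur_prod_of_real_mat of_real_mat_mult_vec)
  then have "sqrt (775 / 3) \<le> mat_opnorm ?B * sqrt 163"
    using norm_mult_vec_le_mat_opnorm[of ?B "of_real_vec y"]
    by (simp add: norm_of_real_vec sum_4 y_def power_divide)
  then have "sqrt (775 / 3) / sqrt 163 \<le> mat_opnorm ?B"
    by (simp add: divide_le_eq)
  also have "\<dots> \<le> schur_norm (M4 :: 'a^4^4)"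
    unfolding M4 by (rule mat_opnorm_schur_prod_le_schur_norm[OF mat_opnorm_reflection_le])
  finally show ?thesis .
qed

lemma schur_norm_M3_less_M4:
  "schur_norm (M3 :: 'a::{real_normed_field,euclidean_space}^3^3) < schur_norm (M4 :: 'a^4^4)"
proof -
  have "schur_norm (M3 :: 'a^3^3) \<le> sqrt (1522626 / 36645\<^sup>2 * 1394)"
    by (rule schur_norm_M3_le)
  also have "\<dots> < sqrt (775 / 3 / 163)"
    by (simp only: real_sqrt_less_iff) simp
  also have "\<dots> = sqrt (775 / 3) / sqrt 163"
    by (rule real_sqrt_divide)
  also have "\<dots> \<le> schur_norm (M4 :: 'a^4^4)"
    by (rule schur_norm_M4_ge)
  finally show ?thesis .
qed

theorem proposition5p4:
  shows "schur_norm (M4 :: real^4^4) > schur_norm (M3 :: real^3^3) \<and>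
         schur_norm (M4 :: complex^4^4) > schur_norm (M3 :: complex^3^3)"
  using schur_norm_M3_less_M4[where 'a=real] schur_norm_M3_less_M4[where 'a=complex] by blast

end
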